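(* Let $p_1,p_2\ge 5$ be distinct primes, $e_i=\zeta_{p_1}^i+\zeta_{p_1}^{-i}$, $b_j=\zeta_{p_2}^j+\zeta_{p_2}^{-j}$, $n_1=\frac{p_1-1}{2}$, $n_2=\frac{p_2-1}{2}$, and $\mathbb{K}=\mathbb{Q}(\zeta_{p_1}+\zeta_{p_1}^{-1})\mathbb{Q}(\zeta_{p_2}+\zeta_{p_2}^{-1})$. Let $\mathcal{I}\subseteq\mathcal{O}_{\mathbb{K}}$ be the $\mathbb{Z}$-module with $\mathbb{Z}$-basis consisting of all products $e_ib_j$ ($1\le i\le n_1$, $1\le j\le n_2$) except that $e_{n_1}b_{n_2}$ is replaced by $2e_{n_1}b_{n_2}$. Then $\mathcal{I}$ is not an ideal of $\mathcal{O}_{\mathbb{K}}$.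
   Context: $\zeta_m=e^{2\pi i/m}$. *)

theory Defs
  imports Complex_Main "HOL-Computational_Algebra.Polynomial"
begin

definition zeta :: "nat \<Rightarrow> complex" where
  "zeta m = exp (2 * of_real pi * \<i> / of_nat m)"

definition subfield_gen :: "complex set \<Rightarrow> complex set" where
  "subfield_gen S = \<Inter>{F. S \<subseteq> F \<and> 1 \<in> F \<and>
      (\<forall>x\<in>F. \<forall>y\<in>F. x + y \<in> F \<and> x * y \<in> F \<and> - x \<in> F \<and> inverse x \<in> F)}"

text \<open>The compositum Q(zeta p1 + zeta p1^-1) Q(zeta p2 + zeta p2^-1) = Q(both generators).\<close>
definition KK :: "nat \<Rightarrow> nat \<Rightarrow> complex set" where
  "KK p1 p2 = subfield_gen {zeta p1 + inverse (zeta p1), zeta p2 + inverse (zeta p2)}"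

definition ring_of_integers :: "complex set \<Rightarrow> complex set" where
  "ring_of_integers K = {x \<in> K. algebraic_int x}"

definition ee :: "nat \<Rightarrow> int \<Rightarrow> complex" where
  "ee p i = zeta p powi i + zeta p powi (- i)"

definition basis_elt :: "nat \<Rightarrow> nat \<Rightarrow> nat \<Rightarrow> nat \<Rightarrow> complex" where
  "basis_elt p1 p2 i j =
     (if i = (p1 - 1) div 2 \<and> j = (p2 - 1) div 2 then 2 else 1)
       * ee p1 (int i) * ee p2 (int j)"

definition II :: "nat \<Rightarrow> nat \<Rightarrow> complex set" where
  "II p1 p2 = {\<Sum>i\<in>{1..(p1 - 1) div 2}. \<Sum>j\<in>{1..(p2 - 1) div 2}.
                  of_int (c i j) * basis_elt p1 p2 i j | c :: nat \<Rightarrow> nat \<Rightarrow> int. True}"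

end

theory Submission
  imports Defs "Jordan_Normal_Form.Char_Poly" "HOL-Computational_Algebra.Field_as_Ring"
    "HOL-Number_Theory.Cong"
begin

(*
  Take x = e_{n1}, an algebraic integer of K, and y = e_1 b_{n2} in I. Since e_{n1+1} = e_{n1},
  x y = (e_{n1} + e_{n1-1}) b_{n2} has coordinate 1 at e_{n1} b_{n2}, whereas every element of I
  has an even coordinate there. Coordinates are unique because the products e_i b_j are linearly
  independent over Q: an integer relation among them, viewed as a polynomial relation for the
  primitive (p1 p2)-th root of unity, persists under all conjugations zeta -> zeta^r with r coprime
  to p1 p2 (Dedekind's Frobenius argument for the irreducibility of the cyclotomic polynomial), and
  summing the conjugates against (e_{i0} - 2)(b_{j0} - 2) over all r < p1 p2 isolates the
  coefficient of e_{i0} b_{j0} by orthogonality of characters and the Chinese remainder theorem.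
*)

definition int_adjoin :: "complex \<Rightarrow> complex set" where
  "int_adjoin w = {poly (of_int_poly h) w | h :: int poly. True}"

lemma int_adjoin_of_int [intro]: "of_int k \<in> int_adjoin w"
  unfolding int_adjoin_def by (intro CollectI exI[of _ "[:k:]"]) (simp add: of_int_hom.map_poly_pCons_hom)

lemma int_adjoin_0 [intro]: "0 \<in> int_adjoin w"
  and int_adjoin_1 [intro]: "1 \<in> int_adjoin w"
  and int_adjoin_of_nat [intro]: "of_nat n \<in> int_adjoin w"
  using int_adjoin_of_int[of 0 w] int_adjoin_of_int[of 1 w] int_adjoin_of_int[of "int n" w] by simp_all

lemma int_adjoin_self [intro]: "w \<in> int_adjoin w"
  unfolding int_adjoin_def by (intro CollectI exI[of _ "[:0,1:]"]) simp

lemma int_adjoin_iff: "x \<in> int_adjoin w \<longleftrightarrow> (\<exists>h. x = poly (of_int_poly h) w)"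
  unfolding int_adjoin_def by blast

lemma int_adjoin_add [intro]: "x \<in> int_adjoin w \<Longrightarrow> y \<in> int_adjoin w \<Longrightarrow> x + y \<in> int_adjoin w"
  unfolding int_adjoin_iff by (metis of_int_hom.map_poly_hom_add poly_add)

lemma int_adjoin_mult [intro]: "x \<in> int_adjoin w \<Longrightarrow> y \<in> int_adjoin w \<Longrightarrow> x * y \<in> int_adjoin w"
  unfolding int_adjoin_iff by (metis of_int_poly_hom.hom_mult poly_mult)

lemma int_adjoin_uminus [intro]: "x \<in> int_adjoin w \<Longrightarrow> - x \<in> int_adjoin w"
  unfolding int_adjoin_iff by (metis of_int_poly_hom.hom_uminus poly_minus)

lemma int_adjoin_diff [intro]: "x \<in> int_adjoin w \<Longrightarrow> y \<in> int_adjoin w \<Longrightarrow> x - y \<in> int_adjoin w"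
  using int_adjoin_add[of x w "- y"] by auto

lemma int_adjoin_power [intro]: "x \<in> int_adjoin w \<Longrightarrow> x ^ n \<in> int_adjoin w"
  by (induction n) auto

lemma int_adjoin_sum [intro]: "(\<And>i. i \<in> A \<Longrightarrow> f i \<in> int_adjoin w) \<Longrightarrow> sum f A \<in> int_adjoin w"
  by (induction A rule: infinite_finite_induct) auto

lemma int_adjoin_poly [intro]: "x \<in> int_adjoin w \<Longrightarrow> poly (of_int_poly h) x \<in> int_adjoin w"
  by (induction h) (auto simp: map_poly_pCons)

lemma power_mod_order: "(w :: 'a :: monoid_mult) ^ N = 1 \<Longrightarrow> w ^ (n mod N) = w ^ n"
  by (metis div_mult_mod_eq mult.commute power_add power_mult power_one mult_1)

text \<open>The matrix of multiplication by h(w) with respect to the powers 1, w, ..., w^(N-1) of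
  a root of unity w of order dividing N.\<close>
definition circulant_mat :: "nat \<Rightarrow> int poly \<Rightarrow> int mat" where
  "circulant_mat N h = mat N N (\<lambda>(j, m). \<Sum>k\<le>degree h. if (j + k) mod N = m then coeff h k else 0)"

lemma circulant_mat_eigenvector:
  fixes w :: complex
  assumes "w ^ N = 1" and "N > 0"
  shows "eigenvector (of_int_hom.mat_hom (circulant_mat N h)) (vec N (\<lambda>j. w ^ j)) (poly (of_int_poly h) w)"
  unfolding eigenvector_def
proof (intro conjI)
  let ?M = "of_int_hom.mat_hom (circulant_mat N h)" and ?v = "vec N (\<lambda>j. w ^ j)"
  let ?x = "poly (of_int_poly h) w"
  show "?v \<in> carrier_vec (dim_row ?M)" by (simp add: circulant_mat_def)
  have "?v $ 0 = 1" using \<open>N > 0\<close> by simp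
  hence "?v \<noteq> 0\<^sub>v N" using \<open>N > 0\<close> by (metis index_zero_vec(1) zero_neq_one)
  thus "?v \<noteq> 0\<^sub>v (dim_row ?M)" by (simp add: circulant_mat_def)
  show "?M *\<^sub>v ?v = ?x \<cdot>\<^sub>v ?v"
  proof (rule eq_vecI)
    fix j assume "j < dim_vec (?x \<cdot>\<^sub>v ?v)"
    hence j: "j < N" by simp
    have "(?M *\<^sub>v ?v) $ j = (\<Sum>m<N. \<Sum>k\<le>degree h. if (j + k) mod N = m then of_int (coeff h k) * w ^ m else 0)"
      using j by (auto simp: circulant_mat_def scalar_prod_def atLeast0LessThan sum_distrib_right
          of_int_sum intro!: sum.cong)
    also have "\<dots> = (\<Sum>k\<le>degree h. of_int (coeff h k) * w ^ ((j + k) mod N))"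
      using \<open>N > 0\<close> by (subst sum.swap) (simp add: sum.delta)
    also have "\<dots> = w ^ j * ?x"
      by (simp add: power_mod_order[OF assms(1)] power_add poly_altdef of_int_hom.degree_map_poly_hom
          sum_distrib_left mult_ac)
    finally show "(?M *\<^sub>v ?v) $ j = (?x \<cdot>\<^sub>v ?v) $ j" using j by simp
  qed (simp add: circulant_mat_def)
qed

lemma int_adjoin_algebraic_int:
  fixes w :: complex
  assumes "w ^ N = 1" and "N > 0" and "x \<in> int_adjoin w"
  shows "algebraic_int x"
proof -
  obtain h where x: "x = poly (of_int_poly h) w" using assms(3) unfolding int_adjoin_def by blast
  have M: "circulant_mat N h \<in> carrier_mat N N" by (simp add: circulant_mat_def)
  hence M': "of_int_hom.mat_hom (circulant_mat N h) \<in> carrier_mat N N" by simp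
  have "eigenvalue (of_int_hom.mat_hom (circulant_mat N h)) x"
    using circulant_mat_eigenvector[OF assms(1,2)] unfolding x eigenvalue_def by blast
  hence "poly (char_poly (of_int_hom.mat_hom (circulant_mat N h))) x = 0"
    using eigenvalue_root_char_poly[OF M'] by blast
  hence "poly (of_int_poly (char_poly (circulant_mat N h))) x = 0"
    unfolding of_int_hom.char_poly_hom[OF M] .
  moreover have "lead_coeff (char_poly (circulant_mat N h)) = 1"
    using degree_monic_char_poly[OF M] by simp
  ultimately show ?thesis
    by (intro algebraic_int.intros[of "of_int_poly (char_poly (circulant_mat N h))"])
      (simp_all add: of_int_hom.degree_map_poly_hom)
qed

lemma int_adjoin_rat_imp_int:
  fixes w :: complex
  assumes "w ^ N = 1" "N > 0" "x \<in> int_adjoin w" "x \<in> \<rat>"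
  shows "x \<in> \<int>"
  using rational_algebraic_int_is_int int_adjoin_algebraic_int assms by blast

lemma zeta_cis: "N > 0 \<Longrightarrow> zeta N = cis (2 * pi / real N)"
  unfolding zeta_def cis_conv_exp by (simp add: field_simps)

lemma zeta_pow_self: "N > 0 \<Longrightarrow> zeta N ^ N = 1"
  by (simp add: zeta_cis DeMoivre)

lemma zeta_nonzero: "zeta N \<noteq> 0"
  unfolding zeta_def by simp

lemma zeta_1: "zeta 1 = 1"
  by (simp add: zeta_cis)

lemma zeta_mult_pow: "a > 0 \<Longrightarrow> b > 0 \<Longrightarrow> zeta (a * b) ^ b = zeta a"
  by (simp add: zeta_cis DeMoivre field_simps)

lemma zeta_pow_eq_1_iff:
  assumes "N > 0" shows "zeta N ^ m = 1 \<longleftrightarrow> N dvd m"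
proof
  assume "zeta N ^ m = 1"
  hence "zeta N ^ (m mod N) = zeta N ^ 0" using power_mod_order[OF zeta_pow_self[OF assms]] by simp
  hence eq: "(\<lambda>k. cis (2 * pi * real k / real N)) (m mod N) = (\<lambda>k. cis (2 * pi * real k / real N)) 0"
    using assms by (simp add: zeta_cis DeMoivre mult_ac)
  have inj: "inj_on (\<lambda>k. cis (2 * pi * real k / real N)) {..<N}"
    using bij_betw_roots_unity[OF assms] unfolding bij_betw_def by blast
  have "m mod N = 0" by (rule inj_onD[OF inj eq]) (use assms in auto)
  thus "N dvd m" by auto
qed (auto simp: power_mult zeta_pow_self[OF assms])

lemma root_unity_in_int_adjoin_zeta:
  assumes "N > 0" and "z ^ N = 1"
  shows "z \<in> int_adjoin (zeta N)"
proof -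
  from bij_betw_roots_unity[OF assms(1)] assms(2) obtain k where "z = cis (2 * pi * real k / real N)"
    unfolding bij_betw_def by auto
  also have "\<dots> = zeta N ^ k" using assms(1) by (simp add: zeta_cis DeMoivre mult_ac)
  finally show ?thesis by auto
qed

text \<open>A form of Gauss's lemma: the coefficients of a monic factor of X^N - 1 are symmetric
  functions of its roots, which are N-th roots of unity.\<close>
lemma monic_factor_root_unity_coeff:
  fixes q :: "complex poly"
  assumes "N > 0" and "lead_coeff q = 1" and "q dvd monom 1 N - 1"
  shows "coeff q i \<in> int_adjoin (zeta N)"
  using assms(2,3)
proof (induction "degree q" arbitrary: q i rule: less_induct)
  case less
  show ?case
  proof (cases "degree q = 0")
    case True
    thus ?thesis using less.prems(1) by (cases i) (auto simp: coeff_eq_0)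
  next
    case False
    hence "\<not> constant (poly q)" by (simp add: constant_degree)
    then obtain z where "poly q z = 0" using fundamental_theorem_of_algebra by blast
    then obtain q' where q: "q = [:-z, 1:] * q'" using poly_eq_0_iff_dvd by (metis dvdE)
    hence "q' \<noteq> 0" using less.prems(1) by auto
    hence "degree q = Suc (degree q')" unfolding q by (subst degree_mult_eq) auto
    moreover have "lead_coeff q' = 1" using less.prems(1) unfolding q lead_coeff_mult by simp
    moreover have "q' dvd monom 1 N - 1" using less.prems(2) q by (metis dvd_mult_right)
    ultimately have IH: "coeff q' j \<in> int_adjoin (zeta N)" for j using less.hyps by auto
    have "poly (monom 1 N - 1) z = 0"
      using less.prems(2) \<open>poly q z = 0\<close> by (metis dvd_def mult_zero_left poly_mult)
    hence "z \<in> int_adjoin (zeta N)" using root_unity_in_int_adjoin_zeta[OF assms(1)] by (simp add: poly_monom)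
    thus ?thesis using IH unfolding q by (cases i) (auto simp: coeff_pCons)
  qed
qed

interpretation of_rat_poly_hom: map_poly_comm_ring_hom "of_rat :: rat \<Rightarrow> complex" ..

lemma monic_rat_factor_root_unity_int_poly:
  fixes d :: "rat poly"
  assumes "N > 0" and "lead_coeff d = 1" and "d dvd monom 1 N - 1"
  shows "of_int_poly (map_poly floor d) = (map_poly of_rat d :: complex poly)"
proof (rule poly_eqI)
  fix i
  have "map_poly of_rat d dvd (map_poly of_rat (monom 1 N - 1) :: complex poly)"
    using assms(3) by (rule of_rat_poly_hom.hom_dvd)
  hence "coeff (map_poly of_rat d :: complex poly) i \<in> int_adjoin (zeta N)"
    using assms(1,2) by (intro monic_factor_root_unity_coeff) (simp_all add: of_rat_poly_hom.hom_minus)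
  hence "(of_rat (coeff d i) :: complex) \<in> \<int>"
    using int_adjoin_rat_imp_int[OF zeta_pow_self[OF assms(1)] assms(1)] by (simp add: coeff_map_poly)
  then obtain k where k: "(of_rat (coeff d i) :: complex) = of_int k" by (elim Ints_cases)
  hence "coeff d i = of_int k" by (metis of_rat_eq_iff of_rat_of_int_eq)
  thus "coeff (of_int_poly (map_poly floor d) :: complex poly) i = coeff (map_poly of_rat d) i"
    using k by (simp add: coeff_map_poly)
qed

lemma add_power_prime:
  fixes x y :: "'a :: comm_ring_1"
  assumes "prime p"
  obtains c where "(x + y) ^ p = x ^ p + y ^ p + of_nat p * (\<Sum>k\<in>{1..p-1}. of_nat (c k) * x ^ k * y ^ (p - k))"
proof -
  have p: "p \<ge> 2" using assms prime_ge_2_nat by blast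
  have c: "p choose k = p * ((p choose k) div p)" if "k \<in> {1..p-1}" for k
    using dvd_choose_prime[of k p] assms that p by auto
  have "(x + y) ^ p = (\<Sum>k\<in>insert 0 (insert p {1..p-1}). of_nat (p choose k) * x ^ k * y ^ (p - k))"
    unfolding binomial_ring using p by (intro sum.cong) auto
  also have "\<dots> = y ^ p + x ^ p + (\<Sum>k\<in>{1..p-1}. of_nat (p choose k) * x ^ k * y ^ (p - k))"
    using p by (subst sum.insert; simp)+
  also have "(\<Sum>k\<in>{1..p-1}. of_nat (p choose k) * x ^ k * y ^ (p - k)) =
      of_nat p * (\<Sum>k\<in>{1..p-1}. of_nat ((p choose k) div p) * x ^ k * y ^ (p - k))"
    unfolding sum_distrib_left by (intro sum.cong refl, subst c) (simp_all add: mult_ac)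
  finally show ?thesis by (intro that) (simp add: add_ac)
qed

lemma int_power_prime_eq:
  fixes a :: int
  assumes "prime p"
  obtains k where "a ^ p = a + int p * k"
proof -
  have "int p dvd int n ^ p - int n" for n
  proof (induction n)
    case 0 thus ?case using assms by (simp add: prime_gt_0_nat power_0_left)
  next
    case (Suc n)
    obtain c where "(int n + 1) ^ p =
        int n ^ p + 1 ^ p + int p * (\<Sum>k\<in>{1..p-1}. int (c k) * int n ^ k * 1 ^ (p - k))"
      using add_power_prime[OF assms, of "int n" 1] by blast
    hence "int (Suc n) ^ p - int (Suc n) =
        (int n ^ p - int n) + int p * (\<Sum>k\<in>{1..p-1}. int (c k) * int n ^ k)"
      by (simp add: add.commute)
    thus ?case using Suc.IH by (metis dvd_add dvd_triv_left)
  qed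
  moreover have "a mod int p = int (nat (a mod int p))"
    using assms by (simp add: prime_gt_0_nat)
  ultimately have "int p dvd (a mod int p) ^ p - a mod int p" by metis
  hence "(a mod int p) ^ p mod int p = a mod int p"
    by (simp add: mod_eq_dvd_iff[symmetric])
  hence "int p dvd a ^ p - a"
    by (simp add: mod_eq_dvd_iff[symmetric] power_mod)
  then obtain k where "a ^ p - a = int p * k" ..
  thus ?thesis by (intro that[of k]) simp
qed

lemma int_adjoin_add_power_prime:
  assumes "prime p" and "x \<in> int_adjoin w" and "y \<in> int_adjoin w"
  shows "\<exists>t\<in>int_adjoin w. (x + y) ^ p = x ^ p + y ^ p + of_nat p * t"
proof -
  obtain c where "(x + y) ^ p = x ^ p + y ^ p + of_nat p * (\<Sum>k\<in>{1..p-1}. of_nat (c k) * x ^ k * y ^ (p - k))"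
    using add_power_prime[OF assms(1)] by blast
  moreover have "(\<Sum>k\<in>{1..p-1}. of_nat (c k) * x ^ k * y ^ (p - k)) \<in> int_adjoin w"
    using assms(2,3) by blast
  ultimately show ?thesis by blast
qed

lemma int_poly_power_prime:
  assumes "prime p" and "x \<in> int_adjoin w"
  shows "\<exists>t\<in>int_adjoin w. poly (of_int_poly h) x ^ p = poly (of_int_poly h) (x ^ p) + of_nat p * t"
proof (induction h)
  case 0 thus ?case using assms(1) by (auto simp: prime_gt_0_nat zero_power)
next
  case (pCons a h)
  let ?y = "poly (of_int_poly h) x"
  obtain t where t: "t \<in> int_adjoin w" "?y ^ p = poly (of_int_poly h) (x ^ p) + of_nat p * t"
    using pCons.IH by blast
  obtain k where k: "a ^ p = a + int p * k" using int_power_prime_eq[OF assms(1)] .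
  obtain s where s: "s \<in> int_adjoin w" "(of_int a + x * ?y) ^ p = of_int a ^ p + (x * ?y) ^ p + of_nat p * s"
    using int_adjoin_add_power_prime[OF assms(1), of "of_int a" w "x * ?y"] assms(2) by auto
  have "(of_int a :: complex) ^ p = of_int a + of_nat p * of_int k"
    using arg_cong[OF k, of "of_int :: int \<Rightarrow> complex"] by simp
  hence "poly (of_int_poly (pCons a h)) x ^ p =
      poly (of_int_poly (pCons a h)) (x ^ p) + of_nat p * (of_int k + x ^ p * t + s)"
    using s(2) t(2) by (simp add: of_int_hom.map_poly_pCons_hom power_mult_distrib algebra_simps)
  thus ?case using s(1) t(1) assms(2) by blast
qed

lemma prime_dvd_of_int_adjoin_multiple:
  fixes w :: complex
  assumes "w ^ N = 1" and "N > 0" and "prime p" and "t \<in> int_adjoin w"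
    and "of_nat m = of_nat p * t"
  shows "p dvd m"
proof (rule ccontr)
  assume "\<not> p dvd m"
  hence "gcd (int p) (int m) = 1" using prime_imp_coprime_nat[OF assms(3)] by simp
  then obtain a b where "a * int p + b * int m = 1" using bezout_int[of "int p" "int m"] by auto
  hence "(of_int (a * int p + b * int m) :: complex) = 1" by simp
  hence "(1 :: complex) = of_int a * of_nat p + of_int b * of_nat m" by simp
  also have "\<dots> = of_nat p * (of_int a + of_int b * t)" using assms(5) by (simp add: algebra_simps)
  finally have one: "(1 :: complex) = of_nat p * (of_int a + of_int b * t)" .
  have p: "p \<noteq> 0" using assms(3) by auto
  have "of_int a + of_int b * t \<in> \<int>"
  proof (rule int_adjoin_rat_imp_int[OF assms(1,2)])
    show "of_int a + of_int b * t \<in> int_adjoin w" using assms(4) by auto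
    have "of_int a + of_int b * t = (of_rat (1 / of_nat p) :: complex)"
      using one p by (simp add: field_simps of_rat_divide)
    thus "of_int a + of_int b * t \<in> \<rat>" by simp
  qed
  then obtain k where "of_int a + of_int b * t = (of_int k :: complex)" by (elim Ints_cases)
  hence "(of_int 1 :: complex) = of_int (int p * k)" using one by simp
  hence "int p dvd 1" by (metis dvdI of_int_eq_iff)
  thus False using assms(3) by (simp add: prime_gt_1_nat)
qed

text \<open>The heart of Dedekind's proof: from D(x) = 0 and Frobenius, D(x^p) is divisible by p,
  so E(x^p) = 0 would make the derivative N X^(N-1) of D E vanish modulo p at x^p.\<close>
lemma root_unity_poly_factor_frobenius:
  fixes D E :: "int poly"
  assumes N: "N > 0" and DE: "of_int_poly D * of_int_poly E = (monom 1 N - 1 :: complex poly)"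
    and x: "x \<in> int_adjoin (zeta N)" "x ^ N = 1" and p: "prime p" "\<not> p dvd N"
    and D: "poly (of_int_poly D) x = 0"
  shows "poly (of_int_poly E) (x ^ p) \<noteq> 0"
proof
  assume E: "poly (of_int_poly E) (x ^ p) = 0"
  obtain y where y: "y \<in> int_adjoin (zeta N)"
    "poly (of_int_poly D) x ^ p = poly (of_int_poly D) (x ^ p) + of_nat p * y"
    using int_poly_power_prime[OF p(1) x(1)] by blast
  have Dp: "poly (of_int_poly D) (x ^ p) = - of_nat p * y"
    using y(2) D p(1) by (simp add: prime_gt_0_nat zero_power eq_neg_iff_add_eq_0)
  have "pderiv (of_int_poly D * of_int_poly E) = (monom (of_nat N) (N - 1) :: complex poly)"
    unfolding DE by (simp add: pderiv_diff pderiv_monom)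
  hence "poly (of_int_poly D * pderiv (of_int_poly E) + of_int_poly E * pderiv (of_int_poly D)) (x ^ p) =
      of_nat N * (x ^ p) ^ (N - 1)"
    by (simp add: pderiv_mult poly_monom)
  hence "of_nat N * (x ^ p) ^ (N - 1) = poly (of_int_poly D) (x ^ p) * poly (pderiv (of_int_poly E)) (x ^ p)"
    using E by simp
  hence "of_nat N * (x ^ p) ^ (N - 1) * x ^ p = of_nat p * (- y * poly (pderiv (of_int_poly E)) (x ^ p) * x ^ p)"
    unfolding Dp by simp
  moreover have "(x ^ p) ^ (N - 1) * x ^ p = (x ^ N) ^ p"
    using power_minus_mult[OF N, of "x ^ p"] by (simp only: power_mult[symmetric] mult.commute)
  ultimately have "of_nat N = of_nat p * (- y * poly (pderiv (of_int_poly E)) (x ^ p) * x ^ p)"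
    using x(2) by (simp add: mult.assoc)
  moreover have "poly (pderiv (of_int_poly E)) (x ^ p) \<in> int_adjoin (zeta N)"
    unfolding of_int_hom.map_poly_pderiv[symmetric] using x(1) by (intro int_adjoin_poly int_adjoin_power)
  hence "- y * poly (pderiv (of_int_poly E)) (x ^ p) * x ^ p \<in> int_adjoin (zeta N)"
    using y(1) x(1) by (intro int_adjoin_mult int_adjoin_uminus int_adjoin_power)
  ultimately have "p dvd N"
    by (rule prime_dvd_of_int_adjoin_multiple[OF zeta_pow_self[OF N] N p(1), rotated])
  thus False using p(2) by contradiction
qed

lemma int_poly_root_power_prime:
  fixes g :: "int poly"
  assumes N: "N > 0" and x: "x \<in> int_adjoin (zeta N)" "x ^ N = 1"
    and g: "poly (of_int_poly g) x = 0" and p: "prime p" "\<not> p dvd N"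
  shows "poly (of_int_poly g) (x ^ p) = 0"
proof (rule ccontr)
  assume gp: "poly (of_int_poly g) (x ^ p) \<noteq> 0"
  define F :: "rat poly" where "F = monom 1 N - 1"
  define d where "d = gcd (of_int_poly g) F"
  have "degree F = N" unfolding F_def using N
    by (subst diff_conv_add_uminus, subst degree_add_eq_left) (auto simp: degree_monom_eq)
  hence lcF: "lead_coeff F = 1" unfolding F_def using N by (simp add: coeff_monom)
  hence "F \<noteq> 0" by auto
  hence lcd: "lead_coeff d = 1" unfolding d_def using poly_gcd_monic by blast
  obtain e where Fde: "F = d * e" unfolding d_def by (metis gcd_dvd2 dvdE)
  hence lce: "lead_coeff e = 1" using lcF lcd by (simp add: lead_coeff_mult)
  define D E where "D = map_poly floor d" and "E = map_poly floor e"
  have D: "of_int_poly D = (map_poly of_rat d :: complex poly)"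
    and E: "of_int_poly E = (map_poly of_rat e :: complex poly)"
    unfolding D_def E_def using Fde lcd lce
    by (auto intro!: monic_rat_factor_root_unity_int_poly[OF N] simp: F_def)
  have DE: "of_int_poly D * of_int_poly E = (monom 1 N - 1 :: complex poly)"
    unfolding D E of_rat_poly_hom.hom_mult[symmetric] Fde[symmetric] by (simp add: F_def of_rat_poly_hom.hom_minus)
  have rat_g: "map_poly of_rat (of_int_poly g) = (of_int_poly g :: complex poly)"
    by (simp add: map_poly_map_poly o_def)
  obtain u v where "u * of_int_poly g + v * F = d"
    using bezout_coefficients_fst_snd[of "of_int_poly g" F] unfolding d_def by blast
  hence "poly (map_poly of_rat d) x =
      poly (map_poly of_rat u) x * poly (of_int_poly g) x + poly (map_poly of_rat v) x * (x ^ N - 1)"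
    by (auto simp: F_def of_rat_poly_hom.hom_add of_rat_poly_hom.hom_mult of_rat_poly_hom.hom_minus
        poly_monom rat_g)
  hence Dx: "poly (of_int_poly D) x = 0" using g x(2) by (simp add: D)
  have "map_poly of_rat d dvd (of_int_poly g :: complex poly)"
    unfolding rat_g[symmetric] d_def by (intro of_rat_poly_hom.hom_dvd) simp
  hence "poly (of_int_poly D) (x ^ p) \<noteq> 0" using gp unfolding D by (metis dvdE mult_zero_left poly_mult)
  moreover have "poly (of_int_poly D * of_int_poly E) (x ^ p) = 0"
    unfolding DE using x(2) by (simp add: poly_monom flip: power_mult) (simp add: power_mult mult.commute)
  ultimately have "poly (of_int_poly E) (x ^ p) = 0" by simp
  thus False using root_unity_poly_factor_frobenius[OF N DE x p Dx] by contradiction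
qed

text \<open>This is the irreducibility of the cyclotomic polynomial over the rationals: an integer
  relation satisfied by zeta N is satisfied by all its conjugates.\<close>
lemma int_poly_root_conjugate:
  fixes g :: "int poly"
  assumes N: "N > 0" and g: "poly (of_int_poly g) (zeta N) = 0"
  shows "coprime r N \<Longrightarrow> poly (of_int_poly g) (zeta N ^ r) = 0"
proof (induction r rule: less_induct)
  case (less r)
  consider "r = 0" | "r = 1" | q where "prime q" "q dvd r" "r \<noteq> 0" "r \<noteq> 1"
    using prime_factor_nat by blast
  thus ?case
  proof cases
    case 1
    hence "zeta N = 1" using less.prems zeta_1 by simp
    thus ?thesis using g by simp
  next
    case 2
    thus ?thesis using g by simp
  next
    case 3
    then obtain s where r: "r = q * s" by (elim dvdE)
    have "s > 0" using 3 r by auto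
    hence "s < r" using r prime_gt_1_nat[OF \<open>prime q\<close>] by simp
    moreover have "coprime s N" using less.prems r by simp
    ultimately have IH: "poly (of_int_poly g) (zeta N ^ s) = 0" by (rule less.IH)
    have "\<not> q dvd N" using 3 less.prems by (metis coprime_common_divisor_nat not_prime_1 prime_nat_iff)
    moreover have "(zeta N ^ s) ^ N = 1"
      by (simp flip: power_mult) (simp add: power_mult mult.commute zeta_pow_self[OF N])
    ultimately have "poly (of_int_poly g) ((zeta N ^ s) ^ q) = 0"
      using int_poly_root_power_prime[OF N _ _ IH \<open>prime q\<close>] by blast
    thus ?thesis unfolding r by (simp only: power_mult[symmetric] mult.commute)
  qed
qed

lemma zeta_powi_cong:
  assumes "p > 0" and "[a = b] (mod int p)"
  shows "zeta p powi a = zeta p powi b"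
proof -
  obtain k where "a = b + int p * k" using assms(2) by (metis cong_iff_lin cong_sym)
  thus ?thesis
    by (simp add: power_int_add power_int_mult zeta_nonzero zeta_pow_self[OF assms(1)])
qed

lemma ee_cong:
  assumes "p > 0" and "[m = n] (mod int p)"
  shows "ee p m = ee p n"
proof -
  have "[- m = - n] (mod int p)" using assms(2) by (simp add: cong_minus_minus_iff)
  thus ?thesis unfolding ee_def using zeta_powi_cong[OF assms(1)] assms(2) by simp
qed

lemma ee_0: "ee p 0 = 2"
  by (simp add: ee_def)

lemma ee_uminus: "ee p (- m) = ee p m"
  by (simp add: ee_def add.commute)

lemma ee_mult: "ee p m * ee p n = ee p (m + n) + ee p (m - n)"
proof -
  let ?z = "\<lambda>k. zeta p powi k"
  have mult: "?z a * ?z b = ?z (a + b)" for a b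
    by (simp add: power_int_add zeta_nonzero)
  have "ee p m * ee p n = (?z m * ?z n + ?z (- m) * ?z (- n)) + (?z m * ?z (- n) + ?z (- m) * ?z n)"
    unfolding ee_def by (simp only: distrib_left distrib_right add_ac)
  also have "\<dots> = ee p (m + n) + ee p (m - n)"
    unfolding mult ee_def by (simp only: minus_add_distrib minus_diff_eq diff_conv_add_uminus
        minus_minus add_ac)
  finally show ?thesis .
qed

lemma ee_eq_zeta_pow:
  assumes "p > 0" and "m \<le> M" and "p dvd M"
  shows "ee p (int m) = zeta p ^ m + zeta p ^ (M - m)"
proof -
  have "[- int m = int (M - m)] (mod int p)"
    using assms(2,3) by (auto simp: cong_iff_dvd_diff of_nat_diff)
  thus ?thesis unfolding ee_def using zeta_powi_cong[OF assms(1)] by simp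
qed

lemma zeta_powi_eq_1_iff:
  assumes "p > 0" shows "zeta p powi m = 1 \<longleftrightarrow> int p dvd m"
proof -
  define k where "k = nat (m mod int p)"
  have k: "m mod int p = int k" "k < p" using assms unfolding k_def by (simp_all add: nat_less_iff)
  have "zeta p powi m = zeta p powi (m mod int p)"
    by (rule zeta_powi_cong[OF assms]) (simp add: cong_def)
  hence "zeta p powi m = zeta p ^ k" unfolding k(1) by (simp only: power_int_of_nat)
  moreover have "p dvd k \<longleftrightarrow> int p dvd m"
    using k by (auto simp: dvd_eq_mod_eq_0)
  ultimately show ?thesis using zeta_pow_eq_1_iff[OF assms] by simp
qed

lemma sum_power_root_unity:
  fixes w :: "'a :: field"
  assumes "w ^ N = 1"
  shows "(\<Sum>a<N. w ^ a) = (if w = 1 then of_nat N else 0)"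
  using assms by (simp add: geometric_sum)

lemma sum_ee:
  assumes "p > 0"
  shows "(\<Sum>a<p. ee p (int a * m)) = (if int p dvd m then 2 * of_nat p else 0)"
proof -
  have root: "(zeta p powi k) ^ p = 1" for k
  proof -
    have "(zeta p powi k) ^ p = zeta p powi (k * int p)" by (simp add: power_int_mult flip: power_int_of_nat)
    also have "\<dots> = zeta p powi 0" by (rule zeta_powi_cong[OF assms]) (simp add: cong_def)
    finally show ?thesis by simp
  qed
  have pow: "zeta p powi (k * int a) = (zeta p powi k) ^ a" for k a
    by (simp add: power_int_mult flip: power_int_of_nat)
  have "ee p (int a * m) = (zeta p powi m) ^ a + (zeta p powi (- m)) ^ a" for a
    unfolding ee_def using pow[of m a] pow[of "- m" a] by (simp add: mult.commute)
  hence "(\<Sum>a<p. ee p (int a * m)) = (\<Sum>a<p. (zeta p powi m) ^ a) + (\<Sum>a<p. (zeta p powi (- m)) ^ a)"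
    by (simp add: sum.distrib)
  thus ?thesis unfolding sum_power_root_unity[OF root] zeta_powi_eq_1_iff[OF assms] by simp
qed

lemma ee_orthogonal:
  assumes "0 < i" "2 * i < p" "0 < i0" "2 * i0 < p"
  shows "(\<Sum>a<p. ee p (int a * int i) * (ee p (int a * int i0) - 2)) = (if i = i0 then 2 * of_nat p else 0)"
proof -
  have p: "p > 0" using assms by simp
  have small: "\<not> int p dvd k" if "0 < \<bar>k\<bar>" "\<bar>k\<bar> < int p" for k
    using that dvd_imp_le_int[of k "int p"] by auto
  have "(\<Sum>a<p. ee p (int a * int i) * (ee p (int a * int i0) - 2)) =
      (\<Sum>a<p. ee p (int a * (int i + int i0))) + (\<Sum>a<p. ee p (int a * (int i - int i0))) -
      2 * (\<Sum>a<p. ee p (int a * int i))"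
    by (simp add: ee_mult algebra_simps sum.distrib sum_subtractf sum_distrib_left)
  also have "\<dots> = (if i = i0 then 2 * of_nat p else 0)"
    unfolding sum_ee[OF p] using assms small[of "int i + int i0"] small[of "int i - int i0"] small[of "int i"]
    by auto
  finally show ?thesis .
qed

lemma sum_mod_mult_coprime:
  fixes f g :: "nat \<Rightarrow> 'a :: comm_semiring_0"
  assumes "coprime a b"
  shows "(\<Sum>r<a * b. f (r mod a) * g (r mod b)) = (\<Sum>x<a. f x) * (\<Sum>y<b. g y)"
proof (cases "a = 0 \<or> b = 0")
  case False
  let ?h = "\<lambda>r. (r mod a, r mod b)"
  have inj: "inj_on ?h {..<a * b}"
  proof (rule inj_onI)
    fix r s assume "r \<in> {..<a * b}" "s \<in> {..<a * b}" "?h r = ?h s"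
    hence "[r = s] (mod a)" and "[r = s] (mod b)" by (simp_all add: cong_def)
    hence "[r = s] (mod a * b)" using assms by (rule coprime_cong_mult_nat)
    thus "r = s" using \<open>r \<in> _\<close> \<open>s \<in> _\<close> by (simp add: cong_less_modulus_unique_nat)
  qed
  have "?h ` {..<a * b} \<subseteq> {..<a} \<times> {..<b}" using False by auto
  moreover have "card (?h ` {..<a * b}) = card ({..<a} \<times> {..<b})"
    using card_image[OF inj] by (simp add: card_cartesian_product)
  ultimately have "bij_betw ?h {..<a * b} ({..<a} \<times> {..<b})"
    using inj by (simp add: bij_betw_def card_subset_eq)
  thus ?thesis
    by (simp add: sum_product sum.cartesian_product sum.reindex_bij_betw[symmetric, where h = ?h])
qed auto

lemma zeta_mult_pow_eq_ee:
  assumes "a > 0" and "b > 0" and "k \<le> a"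
  shows "(zeta (a * b) ^ r) ^ (b * k) + (zeta (a * b) ^ r) ^ (b * (a - k)) = ee a (int r * int k)"
proof -
  have pow: "(zeta (a * b) ^ r) ^ (b * m) = zeta a ^ (r * m)" for m
  proof -
    have "(zeta (a * b) ^ r) ^ (b * m) = (zeta (a * b) ^ b) ^ (r * m)"
      by (simp only: power_mult[symmetric] mult_ac)
    thus ?thesis by (simp only: zeta_mult_pow[OF assms(1,2)])
  qed
  have "ee a (int (r * k)) = zeta a ^ (r * k) + zeta a ^ (r * a - r * k)"
    using assms by (intro ee_eq_zeta_pow) auto
  thus ?thesis unfolding pow by (simp add: diff_mult_distrib2)
qed

lemma ee_products_relation_conjugate:
  fixes d :: "nat \<Rightarrow> nat \<Rightarrow> int"
  assumes p: "p1 > 0" "p2 > 0" and I: "\<forall>i\<in>I. i \<le> p1" and J: "\<forall>j\<in>J. j \<le> p2"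
    and rel: "(\<Sum>i\<in>I. \<Sum>j\<in>J. of_int (d i j) * ee p1 (int i) * ee p2 (int j)) = 0"
    and r: "coprime r (p1 * p2)"
  shows "(\<Sum>i\<in>I. \<Sum>j\<in>J. of_int (d i j) * ee p1 (int r * int i) * ee p2 (int r * int j)) = 0"
proof -
  define g :: "int poly" where "g = (\<Sum>i\<in>I. \<Sum>j\<in>J. Polynomial.smult (d i j)
      ((monom 1 (p2 * i) + monom 1 (p2 * (p1 - i))) * (monom 1 (p1 * j) + monom 1 (p1 * (p2 - j)))))"
  have poly_g: "poly (of_int_poly g) x = (\<Sum>i\<in>I. \<Sum>j\<in>J. of_int (d i j) *
      (x ^ (p2 * i) + x ^ (p2 * (p1 - i))) * (x ^ (p1 * j) + x ^ (p1 * (p2 - j))))" for x :: complex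
    unfolding g_def by (simp add: of_int_poly_hom.hom_sum poly_sum)
      (simp add: of_int_hom.map_poly_hom_smult poly_monom of_int_poly_hom.hom_mult
        of_int_poly_hom.hom_add mult.assoc)
  have g: "poly (of_int_poly g) (zeta (p1 * p2) ^ r) =
      (\<Sum>i\<in>I. \<Sum>j\<in>J. of_int (d i j) * ee p1 (int r * int i) * ee p2 (int r * int j))" for r
    unfolding poly_g using I J zeta_mult_pow_eq_ee[OF p, of _ r] zeta_mult_pow_eq_ee[OF p(2,1), of _ r]
    by (intro sum.cong refl) (simp add: mult.commute[of p2 p1])
  have "poly (of_int_poly g) (zeta (p1 * p2)) = 0" using g[of 1] rel by simp
  hence "poly (of_int_poly g) (zeta (p1 * p2) ^ r) = 0"
    using int_poly_root_conjugate[OF _ _ r] p by simp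
  thus ?thesis unfolding g .
qed

lemma ee_products_linear_independent:
  fixes d :: "nat \<Rightarrow> nat \<Rightarrow> int"
  assumes p: "prime p1" "prime p2" "p1 \<noteq> p2" and n: "2 * n1 < p1" "2 * n2 < p2"
    and rel: "(\<Sum>i\<in>{1..n1}. \<Sum>j\<in>{1..n2}. of_int (d i j) * ee p1 (int i) * ee p2 (int j)) = 0"
    and i0: "i0 \<in> {1..n1}" and j0: "j0 \<in> {1..n2}"
  shows "d i0 j0 = 0"
proof -
  let ?I = "{1..n1}" and ?J = "{1..n2}" and ?N = "p1 * p2"
  define c where
    "c r = (\<Sum>i\<in>?I. \<Sum>j\<in>?J. of_int (d i j) * ee p1 (int r * int i) * ee p2 (int r * int j))" for r
  define F where "F i a = ee p1 (int a * int i) * (ee p1 (int a * int i0) - 2)" for i a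
  define G where "G j b = ee p2 (int b * int j) * (ee p2 (int b * int j0) - 2)" for j b
  have pos: "p1 > 0" "p2 > 0" using p prime_gt_0_nat by auto
  have ee_mod: "ee p (int (r mod p) * int k) = ee p (int r * int k)" if "p > 0" for p r k
    using that by (intro ee_cong) (simp_all add: cong_def of_nat_mod mod_mult_left_eq)
  \<comment> \<open>c r vanishes for r coprime to p1 p2, and otherwise one of the factors is ee p 0 - 2 = 0.\<close>
  have vanish: "c r * (ee p1 (int r * int i0) - 2) * (ee p2 (int r * int j0) - 2) = 0" for r
  proof (cases "coprime r ?N")
    case True
    thus ?thesis unfolding c_def using ee_products_relation_conjugate[OF pos _ _ rel] n by fastforce
  next
    case False
    have "p1 dvd r \<or> p2 dvd r"
    proof (rule ccontr)
      assume "\<not> (p1 dvd r \<or> p2 dvd r)"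
      hence "coprime ?N r" using p(1,2) prime_imp_coprime_nat by simp
      thus False using False by (simp add: coprime_commute)
    qed
    moreover have "ee p (int r * int k) = 2" if "p > 0" "p dvd r" for p k
      using that ee_0 by (metis ee_mod dvd_eq_mod_eq_0 mult_zero_left of_nat_0)
    ultimately show ?thesis using pos by auto
  qed
  have "0 = (\<Sum>r<?N. c r * (ee p1 (int r * int i0) - 2) * (ee p2 (int r * int j0) - 2))"
    using vanish by (intro sum.neutral[symmetric]) blast
  also have "\<dots> = (\<Sum>r<?N. \<Sum>i\<in>?I. \<Sum>j\<in>?J. of_int (d i j) * (F i r * G j r))"
    unfolding c_def F_def G_def sum_distrib_right by (simp add: mult_ac)
  also have "\<dots> = (\<Sum>i\<in>?I. \<Sum>j\<in>?J. of_int (d i j) * (\<Sum>r<?N. F i (r mod p1) * G j (r mod p2)))"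
    unfolding F_def G_def ee_mod[OF pos(1)] ee_mod[OF pos(2)] sum_distrib_left
    by (subst sum.swap, rule sum.cong[OF refl], rule sum.swap)
  also have "\<dots> = (\<Sum>i\<in>?I. \<Sum>j\<in>?J. of_int (d i j) * ((\<Sum>a<p1. F i a) * (\<Sum>b<p2. G j b)))"
    using p by (simp add: sum_mod_mult_coprime primes_coprime)
  also have "\<dots> = (\<Sum>i\<in>?I. \<Sum>j\<in>?J. of_int (d i j) *
      ((if i = i0 then 2 * of_nat p1 else 0) * (if j = j0 then 2 * of_nat p2 else 0)))"
    unfolding F_def G_def using n i0 j0 by (intro sum.cong refl) (simp add: ee_orthogonal)
  also have "\<dots> = of_int (d i0 j0) * (4 * of_nat ?N)"
    using i0 j0
    by (simp add: if_distrib[of "\<lambda>x. _ * x"] if_distrib[of "\<lambda>x. x * _"] sum.delta cong: if_cong)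
  finally show ?thesis using pos by simp
qed

lemma ee_in_subfield_gen:
  assumes "zeta p + inverse (zeta p) \<in> S"
  shows "ee p (int k) \<in> subfield_gen S"
proof -
  have "ee p (int k) \<in> F \<and> ee p (int (Suc k)) \<in> F"
    if F: "S \<subseteq> F" "1 \<in> F"
      "\<forall>x\<in>F. \<forall>y\<in>F. x + y \<in> F \<and> x * y \<in> F \<and> - x \<in> F \<and> inverse x \<in> F" for F
  proof (induction k)
    case 0
    have "(2 :: complex) \<in> F" using F(2,3) by (metis one_add_one)
    thus ?case using F assms by (auto simp: ee_def power_int_minus)
  next
    case (Suc k)
    have eq: "ee p (int (Suc (Suc k))) = ee p (int (Suc k)) * ee p 1 + - ee p (int k)"
      using ee_mult[of p "int (Suc k)" 1] by (simp add: algebra_simps)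
    have "ee p 1 \<in> F" using F assms by (auto simp: ee_def power_int_minus)
    hence "ee p (int (Suc k)) * ee p 1 + - ee p (int k) \<in> F" using Suc F(3) by blast
    hence "ee p (int (Suc (Suc k))) \<in> F" unfolding eq .
    thus ?case using Suc by blast
  qed
  thus ?thesis unfolding subfield_gen_def by blast
qed

lemma ee_in_ring_of_integers:
  assumes "p1 > 0"
  shows "ee p1 (int k) \<in> ring_of_integers (KK p1 p2)"
proof -
  have "ee p1 (int k) = zeta p1 ^ k + zeta p1 ^ (p1 * k - k)"
    using assms by (intro ee_eq_zeta_pow) auto
  hence "ee p1 (int k) \<in> int_adjoin (zeta p1)" by auto
  hence "algebraic_int (ee p1 (int k))" using int_adjoin_algebraic_int zeta_pow_self assms by blast
  thus ?thesis unfolding ring_of_integers_def KK_def by (auto intro: ee_in_subfield_gen)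
qed

lemma ee_middle_mult_ee_1:
  assumes "p = 2 * n + 1"
  shows "ee p (int n) * ee p 1 = ee p (int n) + ee p (int n - 1)"
proof -
  have "ee p (int n + 1) = ee p (- int n)"
    using assms by (intro ee_cong) (auto simp: cong_iff_dvd_diff add_ac)
  thus ?thesis using ee_mult[of p "int n" 1] by (simp add: ee_uminus)
qed

lemma basis_elt_in_II:
  assumes "i \<in> {1..(p1 - 1) div 2}" and "j \<in> {1..(p2 - 1) div 2}"
  shows "basis_elt p1 p2 i j \<in> II p1 p2"
proof -
  define c :: "nat \<Rightarrow> nat \<Rightarrow> int" where "c i' j' = (if i' = i \<and> j' = j then 1 else 0)" for i' j'
  have "of_int (c i' j') * basis_elt p1 p2 i' j' =
      (if j' = j then if i' = i then basis_elt p1 p2 i' j' else 0 else 0)" for i' j'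
    by (simp add: c_def)
  hence "(\<Sum>i'\<in>{1..(p1 - 1) div 2}. \<Sum>j'\<in>{1..(p2 - 1) div 2}. of_int (c i' j') * basis_elt p1 p2 i' j') =
      basis_elt p1 p2 i j"
    using assms by (simp add: sum.delta)
  thus ?thesis unfolding II_def by (intro CollectI exI[of _ c]) simp
qed

lemma II_corner_coeff_even:
  fixes p1 p2 :: nat and a :: "nat \<Rightarrow> nat \<Rightarrow> int"
  defines "n1 \<equiv> (p1 - 1) div 2" and "n2 \<equiv> (p2 - 1) div 2"
  assumes p: "prime p1" "prime p2" "p1 \<noteq> p2" "p1 > 2" "p2 > 2" and x: "x \<in> II p1 p2"
    and a: "x = (\<Sum>i\<in>{1..n1}. \<Sum>j\<in>{1..n2}. of_int (a i j) * ee p1 (int i) * ee p2 (int j))"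
  shows "even (a n1 n2)"
proof -
  obtain c where c: "x = (\<Sum>i\<in>{1..n1}. \<Sum>j\<in>{1..n2}. of_int (c i j) * basis_elt p1 p2 i j)"
    using x unfolding II_def n1_def n2_def by blast
  define d where "d i j = c i j * (if i = n1 \<and> j = n2 then 2 else 1) - a i j" for i j
  have "of_int (d i j) * ee p1 (int i) * ee p2 (int j) =
      of_int (c i j) * basis_elt p1 p2 i j - of_int (a i j) * ee p1 (int i) * ee p2 (int j)" for i j
    unfolding d_def basis_elt_def n1_def n2_def
    by (cases "i = n1 \<and> j = n2") (auto simp: algebra_simps n1_def n2_def)
  hence "(\<Sum>i\<in>{1..n1}. \<Sum>j\<in>{1..n2}. of_int (d i j) * ee p1 (int i) * ee p2 (int j)) =
      (\<Sum>i\<in>{1..n1}. \<Sum>j\<in>{1..n2}. of_int (c i j) * basis_elt p1 p2 i j) -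
      (\<Sum>i\<in>{1..n1}. \<Sum>j\<in>{1..n2}. of_int (a i j) * ee p1 (int i) * ee p2 (int j))"
    by (simp add: sum_subtractf)
  also have "\<dots> = 0" unfolding a[symmetric] c[symmetric] by simp
  finally have "(\<Sum>i\<in>{1..n1}. \<Sum>j\<in>{1..n2}. of_int (d i j) * ee p1 (int i) * ee p2 (int j)) = 0" .
  moreover have "n1 \<in> {1..n1}" "n2 \<in> {1..n2}" "2 * n1 < p1" "2 * n2 < p2"
    using p by (auto simp: n1_def n2_def)
  ultimately have "d n1 n2 = 0" using ee_products_linear_independent[OF p(1-3)] by blast
  hence "a n1 n2 = 2 * c n1 n2" unfolding d_def by simp
  thus ?thesis by simp
qed

lemma ee_middle_mult_basis_elt:
  fixes p1 p2 :: nat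
  defines "n1 \<equiv> (p1 - 1) div 2" and "n2 \<equiv> (p2 - 1) div 2"
  assumes p1: "p1 = 2 * n1 + 1" "n1 \<ge> 2" and p2: "n2 \<ge> 1"
  shows "ee p1 (int n1) * basis_elt p1 p2 1 n2 = (\<Sum>i\<in>{1..n1}. \<Sum>j\<in>{1..n2}.
      of_int (if j = n2 \<and> (i = n1 \<or> i = n1 - 1) then 1 else 0) * ee p1 (int i) * ee p2 (int j))"
proof -
  let ?e = "\<lambda>i j. ee p1 (int i) * ee p2 (int j)"
  have "ee p1 (int n1) * basis_elt p1 p2 1 n2 = (ee p1 (int n1) * ee p1 1) * ee p2 (int n2)"
    using p1 by (simp add: basis_elt_def n1_def[symmetric] n2_def[symmetric] mult.assoc)
  also have "\<dots> = ?e n1 n2 + ?e (n1 - 1) n2"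
    using ee_middle_mult_ee_1[OF p1(1)] p1(2) by (simp add: of_nat_diff distrib_right)
  also have "\<dots> = (\<Sum>i\<in>{1..n1}. \<Sum>j\<in>{1..n2}.
      if j = n2 then (if i = n1 then ?e i j else 0) + (if i = n1 - 1 then ?e i j else 0) else 0)"
    using p1(2) p2 by (simp add: sum.delta sum.distrib)
  also have "\<dots> = (\<Sum>i\<in>{1..n1}. \<Sum>j\<in>{1..n2}.
      of_int (if j = n2 \<and> (i = n1 \<or> i = n1 - 1) then 1 else 0) * ee p1 (int i) * ee p2 (int j))"
    using p1(2) by (intro sum.cong refl) auto
  finally show ?thesis .
qed

theorem proposition3p8:
  fixes p1 p2 :: nat
  assumes "prime p1" and "prime p2" and "p1 \<ge> 5" and "p2 \<ge> 5" and "p1 \<noteq> p2"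
  shows "\<not> (\<forall>x\<in>ring_of_integers (KK p1 p2). \<forall>y\<in>II p1 p2. x * y \<in> II p1 p2)"
proof
  assume ideal: "\<forall>x\<in>ring_of_integers (KK p1 p2). \<forall>y\<in>II p1 p2. x * y \<in> II p1 p2"
  define n1 n2 where "n1 = (p1 - 1) div 2" and "n2 = (p2 - 1) div 2"
  have p1: "p1 = 2 * n1 + 1" "n1 \<ge> 2" and p2: "n2 \<ge> 1"
    using assms prime_odd_nat[of p1] prime_odd_nat[of p2] by (auto simp: n1_def n2_def elim!: oddE)
  have "ee p1 (int n1) \<in> ring_of_integers (KK p1 p2)"
    using p1 by (intro ee_in_ring_of_integers) simp
  moreover have "basis_elt p1 p2 1 n2 \<in> II p1 p2"
    using p1 p2 by (intro basis_elt_in_II) (auto simp: n1_def n2_def)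
  ultimately have "ee p1 (int n1) * basis_elt p1 p2 1 n2 \<in> II p1 p2"
    using ideal by blast
  from II_corner_coeff_even[OF assms(1,2,5) _ _ this[unfolded n1_def n2_def]
      ee_middle_mult_basis_elt[OF p1[unfolded n1_def] p2[unfolded n2_def]]]
  show False using assms by simp
qed

end
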